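(* Let $0<\alpha<\beta<1$. There exists a constant $\tilde C>0$, depending only on $\alpha$ and $\beta$, such that for every $\theta\in[0,1)$ and every $w\in V^\perp(\theta)$, $$|||w|||^2\le\tilde C\int_{Q_1}|w'(y)|^2\,dy.$$
   Context: $Q=(0,1)$, $Q_1=(0,\alpha)\cup(\beta,1)$. Let $p$ be a $1$-periodic measurable function with $p>0$, $p,p^{-1}\in L^\infty(0,1)$. For $\theta\in[0,1)$, $H^1_\theta(Q)=\{u\in H^1(0,1):u(1)=e^{2\pi i\theta}u(0)\}$ and $V(\theta)=\{v\in H^1_\theta(Q):p v'=0\text{ a.e. on }Q_1\}$. On $H^1(Q)$ use the norm $|||u|||=\bigl(|\int_{Q_1}u\,dy|^2+\int_Q|u'|^2dy\bigr)^{1/2}$ with associated inner product $\langle u,v\rangle=\bigl(\int_{Q_1}u\bigr)\overline{\bigl(\int_{Q_1}v\bigr)}+\int_Qu'\overline{v'}$. $V^\perp(\theta)$ is the orthogonal complement of $V(\theta)$ in $H^1_\theta(Q)$ with respect to this inner product. *)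

theory Defs
  imports "HOL-Analysis.Analysis"
begin

definition Q1 :: "real \<Rightarrow> real \<Rightarrow> real set" where
  "Q1 \<alpha> \<beta> = {0<..<\<alpha>} \<union> {\<beta><..<1}"

text \<open>u belongs to H^1(0,1) with weak derivative u' (absolutely continuous
  representative on [0,1], derivative in L^2(0,1)).\<close>
definition H1 :: "(real \<Rightarrow> complex) \<Rightarrow> (real \<Rightarrow> complex) \<Rightarrow> bool" where
  "H1 u u' \<longleftrightarrow> set_borel_measurable lborel {0..1} u'
     \<and> set_integrable lborel {0..1} (\<lambda>x. (cmod (u' x))\<^sup>2)
     \<and> (\<forall>x\<in>{0..1}. u x = u 0 + (LINT t:{0..x}|lborel. u' t))"

definition H1_theta :: "real \<Rightarrow> (real \<Rightarrow> complex) \<Rightarrow> (real \<Rightarrow> complex) \<Rightarrow> bool" where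
  "H1_theta \<theta> u u' \<longleftrightarrow> H1 u u' \<and> u 1 = exp (2 * pi * \<i> * complex_of_real \<theta>) * u 0"

definition V_theta :: "(real \<Rightarrow> real) \<Rightarrow> real \<Rightarrow> real \<Rightarrow> real \<Rightarrow> (real \<Rightarrow> complex) \<Rightarrow> (real \<Rightarrow> complex) \<Rightarrow> bool" where
  "V_theta p \<alpha> \<beta> \<theta> v v' \<longleftrightarrow> H1_theta \<theta> v v'
     \<and> (AE x in lborel. x \<in> Q1 \<alpha> \<beta> \<longrightarrow> complex_of_real (p x) * v' x = 0)"

definition ip :: "real \<Rightarrow> real \<Rightarrow> (real \<Rightarrow> complex) \<Rightarrow> (real \<Rightarrow> complex) \<Rightarrow> (real \<Rightarrow> complex) \<Rightarrow> (real \<Rightarrow> complex) \<Rightarrow> complex" where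
  "ip \<alpha> \<beta> u u' v v' = (LINT y:Q1 \<alpha> \<beta>|lborel. u y) * cnj (LINT y:Q1 \<alpha> \<beta>|lborel. v y)
      + (LINT y:{0<..<1}|lborel. u' y * cnj (v' y))"

definition tnorm_sq :: "real \<Rightarrow> real \<Rightarrow> (real \<Rightarrow> complex) \<Rightarrow> (real \<Rightarrow> complex) \<Rightarrow> real" where
  "tnorm_sq \<alpha> \<beta> u u' = (cmod (LINT y:Q1 \<alpha> \<beta>|lborel. u y))\<^sup>2
      + (LINT y:{0<..<1}|lborel. (cmod (u' y))\<^sup>2)"

definition V_perp :: "(real \<Rightarrow> real) \<Rightarrow> real \<Rightarrow> real \<Rightarrow> real \<Rightarrow> (real \<Rightarrow> complex) \<Rightarrow> (real \<Rightarrow> complex) \<Rightarrow> bool" where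
  "V_perp p \<alpha> \<beta> \<theta> w w' \<longleftrightarrow> H1_theta \<theta> w w'
     \<and> (\<forall>v v'. V_theta p \<alpha> \<beta> \<theta> v v' \<longrightarrow> ip \<alpha> \<beta> w w' v v' = 0)"

definition admissible_coeff :: "(real \<Rightarrow> real) \<Rightarrow> bool" where
  "admissible_coeff p \<longleftrightarrow> p \<in> borel_measurable lborel
     \<and> (\<forall>x. p (x + 1) = p x) \<and> (\<forall>x. p x > 0)
     \<and> (\<exists>M. AE x in lborel. x \<in> {0<..<1} \<longrightarrow> \<bar>p x\<bar> \<le> M)
     \<and> (\<exists>M. AE x in lborel. x \<in> {0<..<1} \<longrightarrow> \<bar>1 / p x\<bar> \<le> M)"

end

theory Submission
  imports Defs
begin

text \<open>Write \<open>a = w(0)\<close>, \<open>e = e\<^sup>2\<^sup>\<pi>\<^sup>i\<^sup>\<theta>\<close>, \<open>A = \<integral>\<^sub>Q\<^sub>1 |w'|\<^sup>2\<close>, \<open>D = \<integral>\<^sub>\<alpha>\<^sup>\<beta> w'\<close> and \<open>I = \<integral>\<^sub>Q\<^sub>1 w\<close>.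
  By Cauchy--Schwarz, \<open>w\<close> oscillates by at most \<open>\<surd>A\<close> on each component of \<open>Q\<^sub>1\<close>; as
  \<open>w(1) = e a\<close>, this gives \<open>D \<approx> (e - 1) a\<close> and \<open>I \<approx> a (\<alpha> + e (1 - \<beta>))\<close> up to errors \<open>2\<surd>A\<close>.
  Orthogonality of \<open>w\<close> to two elements of \<open>V(\<theta>)\<close> that are constant on \<open>Q\<^sub>1\<close> (so that \<open>p\<close>
  plays no role) adds two relations. The one with constant slope on \<open>(\<alpha>,\<beta>)\<close> gives
  \<open>I (\<alpha> + e (1 - \<beta>))\<^sup>* + ((e - 1)/(\<beta> - \<alpha>))\<^sup>* D = 0\<close>, which forces \<open>|a| = O(\<surd>A)\<close> because
  \<open>|\<alpha> + e (1 - \<beta>)|\<^sup>2 + |e - 1|\<^sup>2/(\<beta> - \<alpha>) \<ge> (\<alpha> + 1 - \<beta>)\<^sup>2/2\<close> uniformly in \<open>\<theta>\<close>. The one with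
  derivative \<open>w' - D/(\<beta> - \<alpha>)\<close> on \<open>(\<alpha>,\<beta>)\<close> gives \<open>\<integral>\<^sub>\<alpha>\<^sup>\<beta> |w'|\<^sup>2 = |D|\<^sup>2/(\<beta> - \<alpha>)\<close>. Hence every term
  of \<open>|||w|||\<^sup>2 = |I|\<^sup>2 + A + \<integral>\<^sub>\<alpha>\<^sup>\<beta> |w'|\<^sup>2\<close> is \<open>O(A)\<close>.\<close>

lemma set_integrable_const_bounded:
  fixes c :: "'a::{banach,second_countable_topology}"
  assumes "bounded S" "S \<in> sets lborel"
  shows "set_integrable lborel S (\<lambda>_. c)"
  unfolding set_integrable_def
  using assms emeasure_bounded_finite by (intro integrable_indicator) auto

lemma set_integral_const_interval:
  fixes c :: "'a::{banach,second_countable_topology}"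
  assumes "a \<le> b"
  shows "(LINT x:{a<..<b}|lborel. c) = (b - a) *\<^sub>R c"
  using assms set_integral_const[of "{a<..<b}" lborel c] by simp

lemma set_integral_nonneg:
  fixes f :: "_ \<Rightarrow> real"
  assumes "\<And>x. x \<in> S \<Longrightarrow> 0 \<le> f x"
  shows "0 \<le> (LINT x:S|M. f x)"
  unfolding set_lebesgue_integral_def
  using assms by (intro Bochner_Integration.integral_nonneg) (auto simp: indicator_def)

lemma set_integral_mono_set:
  fixes f :: "_ \<Rightarrow> real"
  assumes "S \<subseteq> T" "S \<in> sets M" "set_integrable M T f" "\<And>x. x \<in> T \<Longrightarrow> 0 \<le> f x"
  shows "(LINT x:S|M. f x) \<le> (LINT x:T|M. f x)"
proof -
  have "set_integrable M S f" using set_integrable_subset assms by blast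
  then show ?thesis
    using assms unfolding set_lebesgue_integral_def set_integrable_def
    by (intro integral_mono) (auto simp: indicator_def)
qed

lemma set_integral_finite_difference:
  fixes f :: "real \<Rightarrow> 'a::{banach,second_countable_topology}"
  assumes "finite X" "(A - B) \<union> (B - A) \<subseteq> X"
  shows "(LINT x:A|lborel. f x) = (LINT x:B|lborel. f x)"
  by (rule set_integral_discrete_difference[OF countable_finite[OF assms(1)] assms(2)]) auto

lemma set_integral_norm_le_measure:
  fixes f :: "real \<Rightarrow> 'a::{banach,second_countable_topology}"
  assumes "set_integrable lborel S f" "bounded S" "S \<in> sets lborel" "\<And>x. x \<in> S \<Longrightarrow> norm (f x) \<le> M"
  shows "norm (LINT x:S|lborel. f x) \<le> measure lborel S * M"
proof -
  have "norm (LINT x:S|lborel. f x) \<le> (LINT x:S|lborel. norm (f x))"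
    by (rule set_integral_norm_bound[OF assms(1)])
  also have "\<dots> \<le> (LINT x:S|lborel. M)"
    using assms set_integrable_norm set_integrable_const_bounded by (intro set_integral_mono) auto
  also have "\<dots> = measure lborel S * M"
    using set_integral_const[OF assms(3), of M] emeasure_bounded_finite[OF assms(2)] by simp
  finally show ?thesis .
qed

lemma set_integrable_complex_of_real:
  fixes f :: "_ \<Rightarrow> real"
  assumes "set_integrable M S f"
  shows "set_integrable M S (\<lambda>x. complex_of_real (f x))"
proof -
  have "(\<lambda>x. indicator S x *\<^sub>R complex_of_real (f x)) = (\<lambda>x. complex_of_real (indicator S x *\<^sub>R f x))"
    by (auto simp: indicator_def)
  then show ?thesis
    using assms unfolding set_integrable_def by (simp only: complex_of_real_integrable_eq)
qed

text \<open>Cauchy--Schwarz against the constant 1, via nonnegativity of the quadratic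
  \<open>c \<mapsto> \<integral>\<^sub>S (g - c)\<^sup>2\<close>.\<close>
lemma set_integral_square_le:
  fixes g :: "_ \<Rightarrow> real"
  assumes g: "set_integrable M S g" and g2: "set_integrable M S (\<lambda>x. (g x)\<^sup>2)"
    and S: "S \<in> sets M" "emeasure M S < \<infinity>"
  shows "(LINT x:S|M. g x)\<^sup>2 \<le> measure M S * (LINT x:S|M. (g x)\<^sup>2)"
proof -
  define N L R where "N = (LINT x:S|M. g x)" and "L = measure M S"
    and "R = (LINT x:S|M. (g x)\<^sup>2)"
  have quadratic_nonneg: "0 \<le> R - 2 * c * N + c\<^sup>2 * L" for c :: real
  proof -
    have const: "set_integrable M S (\<lambda>_. c\<^sup>2)"
      unfolding set_integrable_def using S by (intro integrable_indicator) auto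
    have lin: "set_integrable M S (\<lambda>x. 2 * c * g x)" using g by auto
    have "(\<lambda>x. (g x - c)\<^sup>2) = (\<lambda>x. ((g x)\<^sup>2 - 2 * c * g x) + c\<^sup>2)"
      by (auto simp: power2_eq_square algebra_simps)
    then have "(LINT x:S|M. (g x - c)\<^sup>2) = R - 2 * c * N + c\<^sup>2 * L"
      using set_integral_add(2)[OF set_integral_diff(1)[OF g2 lin] const]
        set_integral_diff(2)[OF g2 lin] set_integral_const[OF S(1), of "c\<^sup>2"] S
      unfolding R_def N_def L_def by (simp add: less_top)
    moreover have "0 \<le> (LINT x:S|M. (g x - c)\<^sup>2)" by (rule set_integral_nonneg) simp
    ultimately show ?thesis by simp
  qed
  show ?thesis
  proof (cases "L = 0")
    case True
    then have "N = 0"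
      using quadratic_nonneg[of "(R + 1) / (2 * N)"] by (cases "N = 0") (auto simp: field_simps)
    then show ?thesis using True unfolding N_def L_def by simp
  next
    case False
    then have "L > 0" unfolding L_def by (simp add: less_le)
    moreover have "0 \<le> R - 2 * (N / L) * N + (N / L)\<^sup>2 * L" by (rule quadratic_nonneg)
    ultimately show ?thesis
      unfolding N_def[symmetric] L_def[symmetric] R_def[symmetric]
      by (simp add: power2_eq_square field_simps)
  qed
qed

lemma set_square_integrable_imp_set_integrable:
  fixes g :: "real \<Rightarrow> 'a::{banach,second_countable_topology}"
  assumes "set_borel_measurable lborel S g" "set_integrable lborel S (\<lambda>x. (norm (g x))\<^sup>2)"
    and "bounded S" "S \<in> sets lborel"
  shows "set_integrable lborel S g"
proof (rule set_integrable_bound[OF _ assms(1)])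
  show "set_integrable lborel S (\<lambda>x. 1 + (norm (g x))\<^sup>2)"
    using assms by (intro set_integral_add(1) set_integrable_const_bounded) auto
  have "t \<le> 1 + t\<^sup>2" for t :: real
    using sum_squares_ge_zero[of "t - 1/2" 0] by (simp add: power2_eq_square algebra_simps)
  then show "AE x in lborel. x \<in> S \<longrightarrow> norm (g x) \<le> norm (1 + (norm (g x))\<^sup>2)"
    by (intro AE_I2) (simp add: add_nonneg_nonneg)
qed

lemma set_square_integrable_add_const:
  fixes g :: "real \<Rightarrow> 'a::{banach,second_countable_topology}"
  assumes meas: "set_borel_measurable lborel S g" and sq: "set_integrable lborel S (\<lambda>x. (norm (g x))\<^sup>2)"
    and S: "bounded S" "S \<in> sets lborel"
  shows "set_borel_measurable lborel S (\<lambda>x. g x + c)"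
    and "set_integrable lborel S (\<lambda>x. (norm (g x + c))\<^sup>2)"
proof -
  have "(\<lambda>x. indicator S x *\<^sub>R (g x + c)) = (\<lambda>x. indicator S x *\<^sub>R g x + indicator S x *\<^sub>R c)"
    by (simp add: scaleR_add_right)
  then show meas': "set_borel_measurable lborel S (\<lambda>x. g x + c)"
    using meas S(2) unfolding set_borel_measurable_def by simp
  have eq: "(\<lambda>x. indicator S x *\<^sub>R (norm (g x + c))\<^sup>2)
      = (\<lambda>x. (norm (indicator S x *\<^sub>R (g x + c)))\<^sup>2)"
    by (auto simp: indicator_def)
  have meas_sq: "set_borel_measurable lborel S (\<lambda>x. (norm (g x + c))\<^sup>2)"
    using meas' unfolding set_borel_measurable_def eq by measurable
  have bound: "set_integrable lborel S (\<lambda>x. 2 * (norm (g x))\<^sup>2 + 2 * (norm c)\<^sup>2)"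
    using sq S by (intro set_integral_add(1) set_integrable_const_bounded) auto
  have "(norm (g x + c))\<^sup>2 \<le> 2 * (norm (g x))\<^sup>2 + 2 * (norm c)\<^sup>2" for x
  proof -
    have "(norm (g x + c))\<^sup>2 \<le> (norm (g x) + norm c)\<^sup>2"
      by (intro power_mono norm_triangle_ineq) simp
    also have "\<dots> \<le> 2 * (norm (g x))\<^sup>2 + 2 * (norm c)\<^sup>2"
      using sum_squares_ge_zero[of "norm (g x) - norm c" 0] by (simp add: power2_eq_square algebra_simps)
    finally show ?thesis .
  qed
  then show "set_integrable lborel S (\<lambda>x. (norm (g x + c))\<^sup>2)"
    by (intro set_integrable_bound[OF bound meas_sq] AE_I2) simp
qed

lemma Q1_subset: "0 \<le> \<alpha> \<Longrightarrow> \<alpha> \<le> \<beta> \<Longrightarrow> \<beta> \<le> 1 \<Longrightarrow> Q1 \<alpha> \<beta> \<subseteq> {0..1}"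
  unfolding Q1_def by auto

lemma H1_set_integrable_deriv:
  assumes "H1 u u'" "S \<in> sets lborel" "S \<subseteq> {0..1}"
  shows "set_integrable lborel S u'"
proof -
  have "set_integrable lborel {0..1} u'"
    by (rule set_square_integrable_imp_set_integrable) (use assms(1) in \<open>auto simp: H1_def\<close>)
  then show ?thesis using set_integrable_subset assms(2,3) by blast
qed

lemma H1_set_integrable_deriv_sq:
  assumes "H1 u u'" "S \<in> sets lborel" "S \<subseteq> {0..1}"
  shows "set_integrable lborel S (\<lambda>x. (cmod (u' x))\<^sup>2)"
  using assms set_integrable_subset unfolding H1_def by blast

lemma H1_diff_eq_integral:
  assumes "H1 u u'" "0 \<le> x" "x \<le> y" "y \<le> 1"
  shows "u y - u x = (LINT t:{x<..y}|lborel. u' t)"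
proof -
  have int: "set_integrable lborel S u'" if "S \<subseteq> {0..y}" "S \<in> sets lborel" for S
    using that assms by (intro H1_set_integrable_deriv[OF assms(1)]) auto
  have "(LINT t:{0..x} \<union> {x<..y}|lborel. u' t) = (LINT t:{0..x}|lborel. u' t) + (LINT t:{x<..y}|lborel. u' t)"
    by (rule set_integral_Un) (use assms in \<open>auto intro: int\<close>)
  moreover have "{0..x} \<union> {x<..y} = {0..y}" using assms by auto
  moreover have "u x = u 0 + (LINT t:{0..x}|lborel. u' t)" "u y = u 0 + (LINT t:{0..y}|lborel. u' t)"
    using assms unfolding H1_def by (meson atLeastAtMost_iff order_trans)+
  ultimately show ?thesis by simp
qed

lemma H1_diff_le_sqrt_energy:
  assumes H: "H1 u u'" and xy: "0 \<le> x" "x \<le> y" "y \<le> 1"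
    and S: "S \<in> sets lborel" "{x<..<y} \<subseteq> S" "S \<subseteq> {0..1}"
  shows "cmod (u y - u x) \<le> sqrt (LINT t:S|lborel. (cmod (u' t))\<^sup>2)"
proof -
  have int: "set_integrable lborel {x<..y} u'" by (rule H1_set_integrable_deriv[OF H]) (use xy in auto)
  have "(cmod (u y - u x))\<^sup>2 \<le> (LINT t:{x<..y}|lborel. cmod (u' t))\<^sup>2"
    unfolding H1_diff_eq_integral[OF H xy]
    by (intro power_mono set_integral_norm_bound[OF int]) simp
  also have "\<dots> \<le> measure lborel {x<..y} * (LINT t:{x<..y}|lborel. (cmod (u' t))\<^sup>2)"
    using xy emeasure_bounded_finite[of "{x<..y}"]
    by (intro set_integral_square_le set_integrable_norm[OF int] H1_set_integrable_deriv_sq[OF H]) auto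
  also have "\<dots> \<le> 1 * (LINT t:S|lborel. (cmod (u' t))\<^sup>2)"
  proof (rule mult_mono)
    have "(LINT t:{x<..y}|lborel. (cmod (u' t))\<^sup>2) = (LINT t:{x<..<y}|lborel. (cmod (u' t))\<^sup>2)"
      by (rule set_integral_finite_difference[of "{y}"]) auto
    also have "\<dots> \<le> (LINT t:S|lborel. (cmod (u' t))\<^sup>2)"
      using S by (intro set_integral_mono_set H1_set_integrable_deriv_sq[OF H]) auto
    finally show "(LINT t:{x<..y}|lborel. (cmod (u' t))\<^sup>2) \<le> (LINT t:S|lborel. (cmod (u' t))\<^sup>2)" .
    show "0 \<le> (LINT t:{x<..y}|lborel. (cmod (u' t))\<^sup>2)" by (rule set_integral_nonneg) simp
  qed (use xy in auto)
  finally show ?thesis by (intro real_le_rsqrt) simp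
qed

lemma H1_continuous_on:
  assumes "H1 u u'"
  shows "continuous_on {0..1} u"
proof -
  have int: "set_integrable lborel {0..1} u'"
    by (rule H1_set_integrable_deriv[OF assms]) auto
  have cont: "continuous_on {0..1} (\<lambda>x. u 0 + integral {0..x} u')"
    using indefinite_integral_continuous_1[OF set_borel_integral_eq_integral(1)[OF int]]
    by (intro continuous_on_add continuous_on_const)
  have eq: "u x = u 0 + integral {0..x} u'" if "x \<in> {0..1}" for x
  proof -
    have "set_integrable lborel {0..x} u'"
      using that by (intro H1_set_integrable_deriv[OF assms]) auto
    moreover have "u x = u 0 + (LINT t:{0..x}|lborel. u' t)"
      using assms that unfolding H1_def by blast
    ultimately show ?thesis by (simp add: set_borel_integral_eq_integral(2))
  qed
  show ?thesis by (rule continuous_on_eq[OF cont]) (rule eq[symmetric])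
qed

lemma H1_set_integrable:
  assumes "H1 u u'" "S \<in> sets lborel" "S \<subseteq> {0..1}"
  shows "set_integrable lborel S u"
  using set_integrable_subset[OF borel_integrable_atLeastAtMost'[OF H1_continuous_on[OF assms(1)]]] assms(2,3) .

lemma H1_jump_estimate:
  assumes ab: "0 \<le> \<alpha>" "\<alpha> \<le> \<beta>" "\<beta> \<le> 1" and H: "H1 w w'" and per: "w 1 = e * w 0"
  shows "cmod ((LINT t:{\<alpha><..<\<beta>}|lborel. w' t) - (e - 1) * w 0)
           \<le> 2 * sqrt (LINT y:Q1 \<alpha> \<beta>|lborel. (cmod (w' y))\<^sup>2)"
proof -
  let ?s = "sqrt (LINT y:Q1 \<alpha> \<beta>|lborel. (cmod (w' y))\<^sup>2)"
  have "(LINT t:{\<alpha><..<\<beta>}|lborel. w' t) = (LINT t:{\<alpha><..\<beta>}|lborel. w' t)"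
    by (rule set_integral_finite_difference[of "{\<beta>}"]) auto
  also have "\<dots> = w \<beta> - w \<alpha>"
    using H1_diff_eq_integral[OF H] ab by simp
  finally have "(LINT t:{\<alpha><..<\<beta>}|lborel. w' t) - (e - 1) * w 0 = - (w 1 - w \<beta>) - (w \<alpha> - w 0)"
    using per by (simp add: algebra_simps)
  also have "cmod \<dots> \<le> cmod (w 1 - w \<beta>) + cmod (w \<alpha> - w 0)"
    by (metis norm_minus_cancel norm_triangle_ineq4)
  also have "\<dots> \<le> ?s + ?s"
    using ab Q1_subset[of \<alpha> \<beta>]
    by (intro add_mono H1_diff_le_sqrt_energy[OF H]) (auto simp: Q1_def)
  finally show ?thesis by simp
qed

lemma H1_mean_estimate:
  assumes ab: "0 \<le> \<alpha>" "\<alpha> \<le> \<beta>" "\<beta> \<le> 1" and H: "H1 w w'" and per: "w 1 = e * w 0"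
  shows "cmod ((LINT y:Q1 \<alpha> \<beta>|lborel. w y) - w 0 * (complex_of_real \<alpha> + e * complex_of_real (1 - \<beta>)))
           \<le> 2 * sqrt (LINT y:Q1 \<alpha> \<beta>|lborel. (cmod (w' y))\<^sup>2)"
proof -
  let ?s = "sqrt (LINT y:Q1 \<alpha> \<beta>|lborel. (cmod (w' y))\<^sup>2)"
  have sub: "{0<..<\<alpha>} \<subseteq> {0..1}" "{\<beta><..<1} \<subseteq> {0..1}" using ab by auto
  have int_left: "set_integrable lborel {0<..<\<alpha>} (\<lambda>y. w y - w 0)"
    using H1_set_integrable[OF H _ sub(1)] set_integrable_const_bounded[of "{0<..<\<alpha>}" "w 0"]
    by (intro set_integral_diff(1)) auto
  have int_right: "set_integrable lborel {\<beta><..<1} (\<lambda>y. w y - w 1)"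
    using H1_set_integrable[OF H _ sub(2)] set_integrable_const_bounded[of "{\<beta><..<1}" "w 1"]
    by (intro set_integral_diff(1)) auto
  have "(LINT y:Q1 \<alpha> \<beta>|lborel. w y) = (LINT y:{0<..<\<alpha>}|lborel. w y) + (LINT y:{\<beta><..<1}|lborel. w y)"
    unfolding Q1_def using ab H1_set_integrable[OF H _ sub(1)] H1_set_integrable[OF H _ sub(2)]
    by (intro set_integral_Un) auto
  also have "\<dots> = (LINT y:{0<..<\<alpha>}|lborel. w y - w 0) + (LINT y:{\<beta><..<1}|lborel. w y - w 1)
                   + w 0 * (complex_of_real \<alpha> + e * complex_of_real (1 - \<beta>))"
    using ab per H1_set_integrable[OF H _ sub(1)] H1_set_integrable[OF H _ sub(2)]
      set_integrable_const_bounded[of "{0<..<\<alpha>}" "w 0"] set_integrable_const_bounded[of "{\<beta><..<1}" "w 1"]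
    by (simp add: set_integral_const_interval scaleR_conv_of_real algebra_simps del: of_real_diff)
  finally have "cmod ((LINT y:Q1 \<alpha> \<beta>|lborel. w y) - w 0 * (complex_of_real \<alpha> + e * complex_of_real (1 - \<beta>)))
      \<le> cmod (LINT y:{0<..<\<alpha>}|lborel. w y - w 0) + cmod (LINT y:{\<beta><..<1}|lborel. w y - w 1)"
    by (simp add: norm_triangle_ineq)
  also have "\<dots> \<le> measure lborel {0<..<\<alpha>} * ?s + measure lborel {\<beta><..<1} * ?s"
  proof (intro add_mono set_integral_norm_le_measure[OF int_left] set_integral_norm_le_measure[OF int_right])
    show "cmod (w y - w 0) \<le> ?s" if "y \<in> {0<..<\<alpha>}" for y
      using that ab Q1_subset[of \<alpha> \<beta>] by (intro H1_diff_le_sqrt_energy[OF H]) (auto simp: Q1_def)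
    show "cmod (w y - w 1) \<le> ?s" if "y \<in> {\<beta><..<1}" for y
    proof -
      have "cmod (w 1 - w y) \<le> ?s"
        using that ab Q1_subset[of \<alpha> \<beta>] by (intro H1_diff_le_sqrt_energy[OF H]) (auto simp: Q1_def)
      then show ?thesis by (simp add: norm_minus_commute)
    qed
  qed auto
  also have "\<dots> \<le> ?s + ?s"
    using ab set_integral_nonneg[of "Q1 \<alpha> \<beta>" "\<lambda>y. (cmod (w' y))\<^sup>2" lborel]
    by (intro add_mono mult_left_le_one_le) auto
  finally show ?thesis by simp
qed

text \<open>When \<open>g\<close> has mass \<open>(e\<^sup>2\<^sup>\<pi>\<^sup>i\<^sup>\<theta> - 1) s\<close> on \<open>(\<alpha>,\<beta>)\<close>, the plateau function equals \<open>s\<close> on \<open>[0,\<alpha>]\<close> and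
  \<open>e\<^sup>2\<^sup>\<pi>\<^sup>i\<^sup>\<theta> s\<close> on \<open>[\<beta>,1]\<close>; being constant on \<open>Q\<^sub>1\<close>, it lies in \<open>V(\<theta>)\<close> whatever \<open>p\<close> is.\<close>
definition plateau_deriv :: "real \<Rightarrow> real \<Rightarrow> (real \<Rightarrow> complex) \<Rightarrow> real \<Rightarrow> complex" where
  "plateau_deriv \<alpha> \<beta> g = (\<lambda>x. indicator {\<alpha><..<\<beta>} x *\<^sub>R g x)"

definition plateau :: "real \<Rightarrow> real \<Rightarrow> complex \<Rightarrow> (real \<Rightarrow> complex) \<Rightarrow> real \<Rightarrow> complex" where
  "plateau \<alpha> \<beta> s g = (\<lambda>x. s + (LINT t:{0..x}|lborel. plateau_deriv \<alpha> \<beta> g t))"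

lemma plateau_eq:
  "plateau \<alpha> \<beta> s g x = s + (LINT t:({0..x} \<inter> {\<alpha><..<\<beta>})|lborel. g t)"
  unfolding plateau_def plateau_deriv_def set_lebesgue_integral_def
  by (simp add: indicator_inter_arith mult.commute)

lemma plateau_eq_left: "x \<le> \<alpha> \<Longrightarrow> plateau \<alpha> \<beta> s g x = s"
proof -
  assume "x \<le> \<alpha>"
  then have "{0..x} \<inter> {\<alpha><..<\<beta>} = {}" by auto
  then show ?thesis unfolding plateau_eq by (simp add: set_lebesgue_integral_def)
qed

lemma plateau_eq_right:
  "0 \<le> \<alpha> \<Longrightarrow> \<beta> \<le> x \<Longrightarrow> plateau \<alpha> \<beta> s g x = s + (LINT t:{\<alpha><..<\<beta>}|lborel. g t)"
proof -
  assume "0 \<le> \<alpha>" "\<beta> \<le> x"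
  then have "{0..x} \<inter> {\<alpha><..<\<beta>} = {\<alpha><..<\<beta>}" by auto
  then show ?thesis unfolding plateau_eq by simp
qed

lemma H1_plateau:
  assumes ab: "0 \<le> \<alpha>" "\<beta> \<le> 1"
    and meas: "set_borel_measurable lborel {0..1} g"
    and sq: "set_integrable lborel {0..1} (\<lambda>x. (cmod (g x))\<^sup>2)"
  shows "H1 (plateau \<alpha> \<beta> s g) (plateau_deriv \<alpha> \<beta> g)"
proof -
  have eq: "(\<lambda>x. indicator {0..1} x *\<^sub>R plateau_deriv \<alpha> \<beta> g x)
      = (\<lambda>x. indicator {\<alpha><..<\<beta>} x *\<^sub>R (indicator {0..1} x *\<^sub>R g x))"
    using ab by (auto simp: plateau_deriv_def indicator_def)
  have "(\<lambda>x. indicator {0..1} x *\<^sub>R (cmod (plateau_deriv \<alpha> \<beta> g x))\<^sup>2)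
      = (\<lambda>x. indicator {\<alpha><..<\<beta>} x *\<^sub>R (cmod (g x))\<^sup>2)"
    using ab by (auto simp: plateau_deriv_def indicator_def)
  moreover have "set_integrable lborel {\<alpha><..<\<beta>} (\<lambda>x. (cmod (g x))\<^sup>2)"
    by (rule set_integrable_subset[OF sq]) (use ab in auto)
  ultimately have "set_integrable lborel {0..1} (\<lambda>x. (cmod (plateau_deriv \<alpha> \<beta> g x))\<^sup>2)"
    unfolding set_integrable_def by simp
  moreover have "set_borel_measurable lborel {0..1} (plateau_deriv \<alpha> \<beta> g)"
    using meas unfolding set_borel_measurable_def eq by measurable
  ultimately show ?thesis
    unfolding H1_def using plateau_eq_left[of 0 \<alpha> \<beta> s g] ab by (simp add: plateau_def)
qed

lemma V_theta_plateau:
  assumes ab: "0 \<le> \<alpha>" "\<beta> \<le> 1"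
    and meas: "set_borel_measurable lborel {0..1} g"
    and sq: "set_integrable lborel {0..1} (\<lambda>x. (cmod (g x))\<^sup>2)"
    and mass: "(LINT t:{\<alpha><..<\<beta>}|lborel. g t) = (exp (2 * pi * \<i> * complex_of_real \<theta>) - 1) * s"
  shows "V_theta p \<alpha> \<beta> \<theta> (plateau \<alpha> \<beta> s g) (plateau_deriv \<alpha> \<beta> g)"
  unfolding V_theta_def H1_theta_def
  using H1_plateau[OF ab meas sq] plateau_eq_left[of 0 \<alpha>] plateau_eq_right[OF ab(1), of \<beta> 1] ab
  by (auto intro!: AE_I2 simp: mass algebra_simps Q1_def plateau_deriv_def)

lemma ip_plateau:
  fixes s :: complex
  assumes ab: "0 \<le> \<alpha>" "\<alpha> \<le> \<beta>" "\<beta> \<le> 1"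
    and mass: "(LINT t:{\<alpha><..<\<beta>}|lborel. g t) = (exp (2 * pi * \<i> * complex_of_real \<theta>) - 1) * s"
  shows "ip \<alpha> \<beta> u u' (plateau \<alpha> \<beta> s g) (plateau_deriv \<alpha> \<beta> g)
           = (LINT y:Q1 \<alpha> \<beta>|lborel. u y)
               * cnj (s * (complex_of_real \<alpha> + exp (2 * pi * \<i> * complex_of_real \<theta>) * complex_of_real (1 - \<beta>)))
             + (LINT y:{\<alpha><..<\<beta>}|lborel. u' y * cnj (g y))"
proof -
  define e v where "e = exp (2 * pi * \<i> * complex_of_real \<theta>)" and "v = plateau \<alpha> \<beta> s g"
  have v_left: "v x = s" if "x \<le> \<alpha>" for x
    unfolding v_def using that by (rule plateau_eq_left)
  have v_right: "v x = e * s" if "\<beta> \<le> x" for x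
    unfolding v_def e_def using plateau_eq_right[OF ab(1) that] by (simp add: mass algebra_simps)
  have int_left: "set_integrable lborel {0<..<\<alpha>} v"
    using set_integrable_const_bounded[of "{0<..<\<alpha>}" s] v_left
    by (subst set_integrable_cong[where f' = "\<lambda>_. s"]) auto
  have int_right: "set_integrable lborel {\<beta><..<1} v"
    using set_integrable_const_bounded[of "{\<beta><..<1}" "e * s"] v_right
    by (subst set_integrable_cong[where f' = "\<lambda>_. e * s"]) auto
  have "(LINT y:Q1 \<alpha> \<beta>|lborel. v y) = (LINT y:{0<..<\<alpha>}|lborel. v y) + (LINT y:{\<beta><..<1}|lborel. v y)"
    unfolding Q1_def by (rule set_integral_Un[OF _ int_left int_right]) (use ab in auto)
  also have "\<dots> = (LINT y:{0<..<\<alpha>}|lborel. s) + (LINT y:{\<beta><..<1}|lborel. e * s)"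
    using v_left v_right by (intro arg_cong2[where f = "(+)"] set_lebesgue_integral_cong) auto
  also have "\<dots> = s * (complex_of_real \<alpha> + e * complex_of_real (1 - \<beta>))"
    using ab by (simp add: set_integral_const_interval scaleR_conv_of_real algebra_simps)
  finally have mean: "(LINT y:Q1 \<alpha> \<beta>|lborel. v y) = s * (complex_of_real \<alpha> + e * complex_of_real (1 - \<beta>))" .
  have "indicator {0<..<1} y *\<^sub>R (u' y * cnj (plateau_deriv \<alpha> \<beta> g y))
      = indicator {\<alpha><..<\<beta>} y *\<^sub>R (u' y * cnj (g y))" for y
    using ab by (auto simp: plateau_deriv_def indicator_def)
  then have "(LINT y:{0<..<1}|lborel. u' y * cnj (plateau_deriv \<alpha> \<beta> g y))
      = (LINT y:{\<alpha><..<\<beta>}|lborel. u' y * cnj (g y))"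
    unfolding set_lebesgue_integral_def by simp
  with mean show ?thesis
    unfolding ip_def e_def v_def by simp
qed

lemma V_perp_orthogonal_plateau:
  assumes perp: "V_perp p \<alpha> \<beta> \<theta> w w'" and ab: "0 \<le> \<alpha>" "\<alpha> \<le> \<beta>" "\<beta> \<le> 1"
    and meas: "set_borel_measurable lborel {0..1} g"
    and sq: "set_integrable lborel {0..1} (\<lambda>x. (cmod (g x))\<^sup>2)"
    and mass: "(LINT t:{\<alpha><..<\<beta>}|lborel. g t) = (exp (2 * pi * \<i> * complex_of_real \<theta>) - 1) * s"
  shows "(LINT y:Q1 \<alpha> \<beta>|lborel. w y)
             * cnj (s * (complex_of_real \<alpha> + exp (2 * pi * \<i> * complex_of_real \<theta>) * complex_of_real (1 - \<beta>)))
           + (LINT y:{\<alpha><..<\<beta>}|lborel. w' y * cnj (g y)) = 0"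
  using perp V_theta_plateau[OF ab(1,3) meas sq mass] ip_plateau[OF ab mass, of w w']
  unfolding V_perp_def by simp

lemma V_perp_mean_relation:
  fixes \<alpha> \<beta> :: real
  assumes perp: "V_perp p \<alpha> \<beta> \<theta> w w'" and ab: "0 \<le> \<alpha>" "\<alpha> < \<beta>" "\<beta> \<le> 1"
  shows "(LINT y:Q1 \<alpha> \<beta>|lborel. w y)
             * cnj (complex_of_real \<alpha> + exp (2 * pi * \<i> * complex_of_real \<theta>) * complex_of_real (1 - \<beta>))
           + cnj ((exp (2 * pi * \<i> * complex_of_real \<theta>) - 1) / complex_of_real (\<beta> - \<alpha>))
             * (LINT t:{\<alpha><..<\<beta>}|lborel. w' t) = 0"
proof -
  define c where "c = (exp (2 * pi * \<i> * complex_of_real \<theta>) - 1) / complex_of_real (\<beta> - \<alpha>)"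
  have "(LINT t:{\<alpha><..<\<beta>}|lborel. c) = (exp (2 * pi * \<i> * complex_of_real \<theta>) - 1) * 1"
    using ab by (simp add: set_integral_const_interval c_def scaleR_conv_of_real del: of_real_diff)
  from V_perp_orthogonal_plateau[OF perp ab(1) less_imp_le[OF ab(2)] ab(3) _ _ this]
  show ?thesis
    unfolding set_borel_measurable_def c_def[symmetric]
    by (simp add: set_integrable_const_bounded mult.commute)
qed

lemma V_perp_energy_relation:
  fixes \<alpha> \<beta> :: real
  assumes perp: "V_perp p \<alpha> \<beta> \<theta> w w'" and ab: "0 \<le> \<alpha>" "\<alpha> < \<beta>" "\<beta> \<le> 1"
  shows "(LINT y:{\<alpha><..<\<beta>}|lborel. (cmod (w' y))\<^sup>2)
           = (cmod (LINT t:{\<alpha><..<\<beta>}|lborel. w' t))\<^sup>2 / (\<beta> - \<alpha>)"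
proof -
  define D d where "D = (LINT t:{\<alpha><..<\<beta>}|lborel. w' t)" and "d = - D / (\<beta> - \<alpha>)"
  have H: "H1 w w'"
    using perp unfolding V_perp_def H1_theta_def by auto
  have sub: "{\<alpha><..<\<beta>} \<subseteq> {0..1}" using ab by auto
  have int_w': "set_integrable lborel {\<alpha><..<\<beta>} w'"
    by (rule H1_set_integrable_deriv[OF H _ sub]) simp
  have meas_w': "set_borel_measurable lborel {0..1} w'"
    and sq_w': "set_integrable lborel {0..1} (\<lambda>x. (cmod (w' x))\<^sup>2)"
    using H unfolding H1_def by auto
  have "(LINT t:{\<alpha><..<\<beta>}|lborel. w' t + d) = D + (LINT t:{\<alpha><..<\<beta>}|lborel. d)"
    unfolding D_def by (rule set_integral_add(2)[OF int_w' set_integrable_const_bounded]) auto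
  also have "\<dots> = (exp (2 * pi * \<i> * complex_of_real \<theta>) - 1) * 0"
    using ab by (simp add: set_integral_const_interval d_def scaleR_conv_of_real del: of_real_diff)
  finally have "(LINT t:{\<alpha><..<\<beta>}|lborel. w' t + d) = (exp (2 * pi * \<i> * complex_of_real \<theta>) - 1) * 0" .
  from V_perp_orthogonal_plateau[OF perp ab(1) less_imp_le[OF ab(2)] ab(3)
      set_square_integrable_add_const[OF meas_w' sq_w' bounded_closed_interval, simplified] this]
  have "(LINT y:{\<alpha><..<\<beta>}|lborel. w' y * cnj (w' y + d)) = 0"
    by simp
  moreover have "(LINT y:{\<alpha><..<\<beta>}|lborel. w' y * cnj (w' y + d))
        = (LINT y:{\<alpha><..<\<beta>}|lborel. complex_of_real ((cmod (w' y))\<^sup>2) + cnj d * w' y)"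
    by (rule set_lebesgue_integral_cong) (auto simp: complex_norm_square[symmetric] algebra_simps)
  moreover have "\<dots> = of_real (LINT y:{\<alpha><..<\<beta>}|lborel. (cmod (w' y))\<^sup>2) + cnj d * D"
    using set_integrable_complex_of_real[OF H1_set_integrable_deriv_sq[OF H _ sub]] int_w'
    by (simp add: set_integral_complex_of_real D_def del: of_real_power)
  moreover have "cnj d * D = - complex_of_real ((cmod D)\<^sup>2 / (\<beta> - \<alpha>))"
    unfolding d_def by (simp add: mult.commute complex_norm_square[symmetric] del: of_real_diff)
  ultimately have "complex_of_real (LINT y:{\<alpha><..<\<beta>}|lborel. (cmod (w' y))\<^sup>2)
      = complex_of_real ((cmod D)\<^sup>2 / (\<beta> - \<alpha>))"
    by (simp only: add_eq_0_iff2 minus_minus)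
  then show ?thesis
    unfolding D_def of_real_eq_iff .
qed

lemma plateau_norm_lower_bound:
  fixes e :: complex and \<alpha> \<beta> :: real
  assumes "0 \<le> \<alpha>" "\<alpha> < \<beta>" "\<beta> \<le> 1" "cmod e = 1"
  shows "(\<alpha> + 1 - \<beta>)\<^sup>2
           \<le> 2 * ((cmod (complex_of_real \<alpha> + e * complex_of_real (1 - \<beta>)))\<^sup>2 + (cmod (e - 1))\<^sup>2 / (\<beta> - \<alpha>))"
proof -
  let ?P = "complex_of_real \<alpha> + e * complex_of_real (1 - \<beta>)"
  have eq: "?P - (1 - \<beta>) * (e - 1) = complex_of_real (\<alpha> + 1 - \<beta>)"
    by (simp add: algebra_simps)
  have "\<alpha> + 1 - \<beta> = cmod (?P - (1 - \<beta>) * (e - 1))"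
    unfolding eq norm_of_real using assms by simp
  also have "\<dots> \<le> cmod ?P + (1 - \<beta>) * cmod (e - 1)"
    using norm_triangle_ineq4[of ?P "(1 - \<beta>) * (e - 1)"] assms by (simp add: norm_mult del: of_real_diff)
  also have "\<dots> \<le> cmod ?P + cmod (e - 1)"
    using assms by (simp add: mult_left_le_one_le)
  finally have "(\<alpha> + 1 - \<beta>)\<^sup>2 \<le> (cmod ?P + cmod (e - 1))\<^sup>2"
    using assms by (intro power_mono) simp_all
  also have "\<dots> \<le> 2 * ((cmod ?P)\<^sup>2 + (cmod (e - 1))\<^sup>2)"
    using sum_squares_ge_zero[of "cmod ?P - cmod (e - 1)" 0] by (simp add: power2_eq_square algebra_simps)
  also have "\<dots> \<le> 2 * ((cmod ?P)\<^sup>2 + (cmod (e - 1))\<^sup>2 / (\<beta> - \<alpha>))"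
    using assms by (simp add: le_divide_eq mult_left_le)
  finally show ?thesis .
qed

lemma norm_plateau_mean_le_1:
  fixes e :: complex and \<alpha> \<beta> :: real
  assumes "0 \<le> \<alpha>" "\<alpha> \<le> \<beta>" "\<beta> \<le> 1" "cmod e = 1"
  shows "cmod (complex_of_real \<alpha> + e * complex_of_real (1 - \<beta>)) \<le> 1"
proof -
  have "cmod (complex_of_real \<alpha> + e * complex_of_real (1 - \<beta>))
      \<le> cmod (complex_of_real \<alpha>) + cmod (e * (1 - \<beta>))"
    by (rule norm_triangle_ineq)
  also have "\<dots> = \<alpha> + (1 - \<beta>)" using assms by (simp add: norm_mult del: of_real_diff)
  finally show ?thesis using assms by simp
qed

definition C_boundary :: "real \<Rightarrow> real \<Rightarrow> real" where
  "C_boundary \<alpha> \<beta> = 2 * (2 + 4 / (\<beta> - \<alpha>)) / (\<alpha> + 1 - \<beta>)\<^sup>2"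

definition C_tilde :: "real \<Rightarrow> real \<Rightarrow> real" where
  "C_tilde \<alpha> \<beta> = (C_boundary \<alpha> \<beta> + 2)\<^sup>2 + 1 + (2 * C_boundary \<alpha> \<beta> + 2)\<^sup>2 / (\<beta> - \<alpha>)"

lemma C_tilde_pos: "\<alpha> < \<beta> \<Longrightarrow> 0 < C_tilde \<alpha> \<beta>"
  unfolding C_tilde_def by (intro add_pos_nonneg add_nonneg_pos divide_nonneg_pos) auto

lemma boundary_value_bound:
  fixes e a D I :: complex and \<alpha> \<beta> s :: real
  assumes ab: "0 < \<alpha>" "\<alpha> < \<beta>" "\<beta> < 1" and e: "cmod e = 1" and s: "0 \<le> s"
    and hD: "cmod (D - (e - 1) * a) \<le> 2 * s"
    and hI: "cmod (I - a * (complex_of_real \<alpha> + e * complex_of_real (1 - \<beta>))) \<le> 2 * s"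
    and orth: "I * cnj (complex_of_real \<alpha> + e * complex_of_real (1 - \<beta>))
                 + cnj ((e - 1) / complex_of_real (\<beta> - \<alpha>)) * D = 0"
  shows "cmod a \<le> C_boundary \<alpha> \<beta> * s"
proof -
  define P Q where "P = complex_of_real \<alpha> + e * complex_of_real (1 - \<beta>)"
    and "Q = (e - 1) / complex_of_real (\<beta> - \<alpha>)"
  define K where "K = (cmod P)\<^sup>2 + (cmod (e - 1))\<^sup>2 / (\<beta> - \<alpha>)"
  have PP: "P * cnj P = of_real ((cmod P)\<^sup>2)"
    using complex_norm_square[of P] by simp
  have QQ: "cnj Q * (e - 1) = of_real ((cmod (e - 1))\<^sup>2 / (\<beta> - \<alpha>))"
    unfolding Q_def using complex_norm_square[of "e - 1"] by (simp add: mult.commute)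
  have "(a * P + (I - a * P)) * cnj P + cnj Q * ((e - 1) * a + (D - (e - 1) * a)) = 0"
    using orth unfolding P_def Q_def by simp
  then have "a * (P * cnj P) + a * (cnj Q * (e - 1)) = - ((I - a * P) * cnj P + cnj Q * (D - (e - 1) * a))"
    by (simp add: algebra_simps)
  then have "a * of_real K = - ((I - a * P) * cnj P + cnj Q * (D - (e - 1) * a))"
    unfolding PP QQ K_def by (simp add: algebra_simps)
  then have "cmod (a * of_real K) = cmod ((I - a * P) * cnj P + cnj Q * (D - (e - 1) * a))"
    using norm_minus_cancel by (metis (no_types))
  moreover have "0 \<le> K" unfolding K_def using ab by simp
  ultimately have "cmod a * K = cmod ((I - a * P) * cnj P + cnj Q * (D - (e - 1) * a))"
    by (simp add: norm_mult)
  also have "\<dots> \<le> cmod (I - a * P) * cmod P + cmod Q * cmod (D - (e - 1) * a)"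
    using norm_triangle_ineq[of "(I - a * P) * cnj P" "cnj Q * (D - (e - 1) * a)"]
    by (simp add: norm_mult)
  also have "\<dots> \<le> 2 * s * 1 + 2 / (\<beta> - \<alpha>) * (2 * s)"
  proof (intro add_mono mult_mono)
    show "cmod P \<le> 1" unfolding P_def using ab e by (intro norm_plateau_mean_le_1) auto
    have "cmod (e - 1) \<le> 2" using norm_triangle_ineq4[of e 1] e by simp
    then show "cmod Q \<le> 2 / (\<beta> - \<alpha>)"
      unfolding Q_def using ab by (simp add: norm_divide divide_right_mono del: of_real_diff)
  qed (use hI hD s ab in \<open>simp_all add: P_def\<close>)
  finally have aK: "cmod a * K \<le> (2 + 4 / (\<beta> - \<alpha>)) * s" by (simp add: algebra_simps)
  have k: "(\<alpha> + 1 - \<beta>)\<^sup>2 \<le> 2 * K" "0 < (\<alpha> + 1 - \<beta>)\<^sup>2"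
    unfolding K_def P_def using plateau_norm_lower_bound[of \<alpha> \<beta> e] ab e by auto
  then have "cmod a * (\<alpha> + 1 - \<beta>)\<^sup>2 \<le> 2 * (2 + 4 / (\<beta> - \<alpha>)) * s"
    using aK mult_left_mono[OF k(1) norm_ge_zero[of a]] by linarith
  then have "cmod a \<le> 2 * (2 + 4 / (\<beta> - \<alpha>)) * s / (\<alpha> + 1 - \<beta>)\<^sup>2"
    by (subst pos_le_divide_eq[OF k(2)])
  then show ?thesis
    unfolding C_boundary_def by (simp only: times_divide_eq_left)
qed

lemma energy_bound_of_relations:
  fixes e a D I :: complex and \<alpha> \<beta> A B :: real
  assumes ab: "0 < \<alpha>" "\<alpha> < \<beta>" "\<beta> < 1" and e: "cmod e = 1" and A: "0 \<le> A"
    and hD: "cmod (D - (e - 1) * a) \<le> 2 * sqrt A"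
    and hI: "cmod (I - a * (complex_of_real \<alpha> + e * complex_of_real (1 - \<beta>))) \<le> 2 * sqrt A"
    and orth: "I * cnj (complex_of_real \<alpha> + e * complex_of_real (1 - \<beta>))
                 + cnj ((e - 1) / complex_of_real (\<beta> - \<alpha>)) * D = 0"
    and hB: "B = (cmod D)\<^sup>2 / (\<beta> - \<alpha>)"
  shows "(cmod I)\<^sup>2 + A + B \<le> C_tilde \<alpha> \<beta> * A"
proof -
  define c s where "c = C_boundary \<alpha> \<beta>" and "s = sqrt A"
  have s: "0 \<le> s" "s\<^sup>2 = A" using A by (auto simp: s_def)
  have a: "cmod a \<le> c * s"
    unfolding c_def s_def using boundary_value_bound[OF ab e _ hD hI orth] A by simp
  have "cmod D \<le> cmod ((e - 1) * a) + cmod (D - (e - 1) * a)"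
    using norm_triangle_ineq[of "(e - 1) * a" "D - (e - 1) * a"] by simp
  also have "\<dots> \<le> 2 * cmod a + 2 * s"
  proof (intro add_mono)
    have "cmod (e - 1) \<le> 2" using norm_triangle_ineq4[of e 1] e by simp
    then show "cmod ((e - 1) * a) \<le> 2 * cmod a" by (simp add: norm_mult mult_right_mono)
  qed (use hD s_def in simp)
  finally have "cmod D \<le> (2 * c + 2) * s" using a by (simp add: algebra_simps)
  then have "(cmod D)\<^sup>2 \<le> ((2 * c + 2) * s)\<^sup>2" by (intro power_mono) simp_all
  then have "B \<le> (2 * c + 2)\<^sup>2 * A / (\<beta> - \<alpha>)"
    unfolding hB using s ab by (simp add: power_mult_distrib divide_right_mono)
  let ?P = "complex_of_real \<alpha> + e * complex_of_real (1 - \<beta>)"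
  have "cmod I \<le> cmod (a * ?P) + cmod (I - a * ?P)"
    using norm_triangle_ineq[of "a * ?P" "I - a * ?P"] by simp
  also have "\<dots> \<le> cmod a + 2 * s"
  proof (intro add_mono)
    show "cmod (a * ?P) \<le> cmod a"
      using norm_plateau_mean_le_1[of \<alpha> \<beta> e] ab e by (simp add: norm_mult mult_left_le del: of_real_diff)
  qed (use hI s_def in simp)
  finally have "cmod I \<le> (c + 2) * s" using a by (simp add: algebra_simps)
  then have "(cmod I)\<^sup>2 \<le> ((c + 2) * s)\<^sup>2" by (intro power_mono) simp_all
  then have "(cmod I)\<^sup>2 \<le> (c + 2)\<^sup>2 * A" using s by (simp add: power_mult_distrib)
  with \<open>B \<le> _\<close> show ?thesis
    unfolding C_tilde_def c_def[symmetric] by (simp add: algebra_simps)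
qed

lemma tnorm_sq_split:
  assumes ab: "0 \<le> \<alpha>" "\<alpha> \<le> \<beta>" "\<beta> \<le> 1" and H: "H1 w w'"
  shows "tnorm_sq \<alpha> \<beta> w w' = (cmod (LINT y:Q1 \<alpha> \<beta>|lborel. w y))\<^sup>2
           + (LINT y:Q1 \<alpha> \<beta>|lborel. (cmod (w' y))\<^sup>2) + (LINT y:{\<alpha><..<\<beta>}|lborel. (cmod (w' y))\<^sup>2)"
proof -
  have "(LINT y:{0<..<1}|lborel. (cmod (w' y))\<^sup>2)
      = (LINT y:Q1 \<alpha> \<beta> \<union> {\<alpha><..<\<beta>}|lborel. (cmod (w' y))\<^sup>2)"
    by (rule set_integral_finite_difference[of "{\<alpha>, \<beta>}"]) (use ab in \<open>auto simp: Q1_def\<close>)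
  also have "\<dots> = (LINT y:Q1 \<alpha> \<beta>|lborel. (cmod (w' y))\<^sup>2)
                   + (LINT y:{\<alpha><..<\<beta>}|lborel. (cmod (w' y))\<^sup>2)"
    using ab Q1_subset[OF ab]
    by (intro set_integral_Un H1_set_integrable_deriv_sq[OF H]) (auto simp: Q1_def)
  finally show ?thesis unfolding tnorm_sq_def by simp
qed

theorem proposition3p3:
  fixes \<alpha> \<beta> :: real
  assumes "0 < \<alpha>" and "\<alpha> < \<beta>" and "\<beta> < 1"
  shows "\<exists>C>0. \<forall>p. admissible_coeff p \<longrightarrow>
           (\<forall>\<theta>\<in>{0..<1}. \<forall>w w'. V_perp p \<alpha> \<beta> \<theta> w w' \<longrightarrow>
              tnorm_sq \<alpha> \<beta> w w' \<le> C * (LINT y:Q1 \<alpha> \<beta>|lborel. (cmod (w' y))\<^sup>2))"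
proof (intro exI[of _ "C_tilde \<alpha> \<beta>"] conjI allI impI ballI)
  show "0 < C_tilde \<alpha> \<beta>" using assms by (intro C_tilde_pos)
  fix p \<theta> w w'
  assume perp: "V_perp p \<alpha> \<beta> \<theta> w w'"
  have ab: "0 \<le> \<alpha>" "\<alpha> \<le> \<beta>" "\<beta> \<le> 1" using assms by auto
  have H: "H1 w w'" and per: "w 1 = exp (2 * pi * \<i> * complex_of_real \<theta>) * w 0"
    using perp unfolding V_perp_def H1_theta_def by auto
  show "tnorm_sq \<alpha> \<beta> w w' \<le> C_tilde \<alpha> \<beta> * (LINT y:Q1 \<alpha> \<beta>|lborel. (cmod (w' y))\<^sup>2)"
    unfolding tnorm_sq_split[OF ab H] V_perp_energy_relation[OF perp ab(1) assms(2) ab(3)]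
    using energy_bound_of_relations[OF assms _ _ H1_jump_estimate[OF ab H per] H1_mean_estimate[OF ab H per]
        V_perp_mean_relation[OF perp ab(1) assms(2) ab(3)] refl]
      set_integral_nonneg[of "Q1 \<alpha> \<beta>" "\<lambda>y. (cmod (w' y))\<^sup>2" lborel]
    by simp
qed

end
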